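(* Let $\sigma=(\sigma_1,\dots,\sigma_N):\Delta_d\to\mathbb{R}^N$ be continuous and of class $C^1$ on every open face of $\Delta_d$. Then $\sigma$ has finite volume if and only if for every subset $\{i_1,\dots,i_d\}\subset\{1,\dots,N\}$ the integral $\int_{\Delta_d}\sigma^*(\mathrm{d}x_{i_1}\wedge\dots\wedge\mathrm{d}x_{i_d})$ converges absolutely.
   Context: The standard $d$-simplex is $\Delta_d=\{(a_1,\dots,a_d)\in\mathbb{R}^d\mid a_i\ge 0,\ \sum a_i\le 1\}$. An open face of $\Delta_d$ is the interior of a face (of any dimension) of $\Delta_d$. The pull-back $\sigma^*(\omega)$ of a form is defined on the interior of $\Delta_d$, where $\sigma$ is $C^1$. Such a $\sigma$ is said to have finite volume if $\int_{\Delta_d}\sigma^*(\omega)$ converges absolutely for every continuous $d$-form $\omega$ on $\sigma(\Delta_d)$. *)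

theory Defs
  imports "HOL-Analysis.Analysis"
begin

definition std_simplex :: "(real ^ 'd) set" where
  "std_simplex = {a. (\<forall>i. 0 \<le> a $ i) \<and> (\<Sum>i\<in>UNIV. a $ i) \<le> 1}"

definition C1_on :: "('a::real_normed_vector \<Rightarrow> 'b::real_normed_vector) \<Rightarrow> 'a set \<Rightarrow> bool" where
  "C1_on f S \<longleftrightarrow> (\<exists>D. (\<forall>x\<in>S. (f has_derivative blinfun_apply (D x)) (at x within S))
                        \<and> continuous_on S D)"

definition continuous_dform ::
  "(real ^ 'n) set \<Rightarrow> (real ^ 'n \<Rightarrow> ('d \<Rightarrow> real ^ 'n) \<Rightarrow> real) \<Rightarrow> bool" where
  "continuous_dform K \<omega> \<longleftrightarrow>
     (\<forall>x\<in>K. (\<forall>v i. linear (\<lambda>u. \<omega> x (v(i := u))))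
           \<and> (\<forall>v i j. i \<noteq> j \<and> v i = v j \<longrightarrow> \<omega> x v = 0))
     \<and> (\<forall>v. continuous_on K (\<lambda>x. \<omega> x v))"

text \<open>Pull-back of \<omega> by \<sigma>, as the coefficient of da_1 \<and> ... \<and> da_d at an interior point a.\<close>
definition pullback_coeff ::
  "(real ^ 'n \<Rightarrow> ('d \<Rightarrow> real ^ 'n) \<Rightarrow> real) \<Rightarrow> (real ^ 'd \<Rightarrow> real ^ 'n) \<Rightarrow> real ^ 'd \<Rightarrow> real" where
  "pullback_coeff \<omega> \<sigma> a = \<omega> (\<sigma> a) (\<lambda>j. frechet_derivative \<sigma> (at a) (axis j 1))"

definition finite_volume :: "(real ^ 'd \<Rightarrow> real ^ 'n) \<Rightarrow> bool" where
  "finite_volume \<sigma> \<longleftrightarrow>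
     (\<forall>\<omega> :: real ^ 'n \<Rightarrow> ('d \<Rightarrow> real ^ 'n) \<Rightarrow> real.
        continuous_dform (\<sigma> ` std_simplex) \<omega> \<longrightarrow>
        pullback_coeff \<omega> \<sigma> absolutely_integrable_on interior std_simplex)"

text \<open>Pull-back of dx_{\<iota> 1} \<and> ... \<and> dx_{\<iota> d}: the d x d minor of the Jacobian.\<close>
definition pullback_coord_coeff :: "('d \<Rightarrow> 'n) \<Rightarrow> (real ^ 'd \<Rightarrow> real ^ 'n) \<Rightarrow> real ^ 'd \<Rightarrow> real" where
  "pullback_coord_coeff \<iota> \<sigma> a = det (\<chi> k j. frechet_derivative \<sigma> (at a) (axis j 1) $ \<iota> k)"

end

theory Submission
  imports Defs
begin

text \<open>At each point a d-form is an alternating multilinear map, hence a linear combination of the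
  coordinate forms \<open>dx\<^sub>I\<close> whose coefficients are its values on the standard basis vectors
  \<open>e\<^sub>I\<close>. Pulled back along \<sigma>, the coefficients become continuous functions on the compact
  simplex, hence bounded, so absolute integrability passes from the pull-backs of the coordinate
  forms to that of any continuous d-form; conversely each \<open>dx\<^sub>I\<close> is itself a continuous d-form.\<close>

definition multilinear :: "(('d \<Rightarrow> 'v::real_vector) \<Rightarrow> real) \<Rightarrow> bool" where
  "multilinear f \<longleftrightarrow> (\<forall>v i. linear (\<lambda>u. f (v(i := u))))"

definition alternating :: "(('d \<Rightarrow> 'v) \<Rightarrow> real) \<Rightarrow> bool" where
  "alternating f \<longleftrightarrow> (\<forall>v i j. i \<noteq> j \<and> v i = v j \<longrightarrow> f v = 0)"

lemma alternatingD: "alternating f \<Longrightarrow> i \<noteq> j \<Longrightarrow> v i = v j \<Longrightarrow> f v = 0"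
  unfolding alternating_def by blast

lemma continuous_dform_iff:
  "continuous_dform K \<omega> \<longleftrightarrow>
     (\<forall>x\<in>K. multilinear (\<omega> x) \<and> alternating (\<omega> x)) \<and> (\<forall>v. continuous_on K (\<lambda>x. \<omega> x v))"
  unfolding continuous_dform_def multilinear_def alternating_def ..

lemma multilinear_sum_expansion:
  fixes f :: "('d \<Rightarrow> 'v::real_vector) \<Rightarrow> real"
  assumes f: "multilinear f" and "finite I" "finite T"
  shows "f (override_on u (\<lambda>j. \<Sum>i\<in>I. a j i *\<^sub>R b i) T) =
    (\<Sum>g\<in>T \<rightarrow>\<^sub>E I. (\<Prod>j\<in>T. a j (g j)) * f (override_on u (b \<circ> g) T))"
  using \<open>finite T\<close>
proof (induction T arbitrary: u rule: finite_induct)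
  case empty
  then show ?case by simp
next
  case (insert t T)
  let ?s = "\<lambda>j. \<Sum>i\<in>I. a j i *\<^sub>R b i"
  let ?F = "\<lambda>T g. (\<Prod>j\<in>T. a j (g j)) * f (override_on u (b \<circ> g) T)"
  have slot: "f ((override_on u (b \<circ> g) T)(t := ?s t)) =
      (\<Sum>i\<in>I. a t i * f (override_on u (b \<circ> g(t := i)) (insert t T)))" for g
  proof -
    have "override_on u (b \<circ> g(t := i)) (insert t T) = (override_on u (b \<circ> g) T)(t := b i)" for i
      using insert.hyps by (auto simp: override_on_def fun_eq_iff)
    moreover have lin: "linear (\<lambda>x. f ((override_on u (b \<circ> g) T)(t := x)))"
      using f by (simp add: multilinear_def)
    ultimately show ?thesis
      by (simp add: linear_sum[OF lin] linear_cmul[OF lin])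
  qed
  have "f (override_on u ?s (insert t T)) = (\<Sum>g\<in>T \<rightarrow>\<^sub>E I. (\<Prod>j\<in>T. a j (g j)) *
      f ((override_on u (b \<circ> g) T)(t := ?s t)))"
  proof -
    have upd: "override_on (u(t := ?s t)) (b \<circ> g) T = (override_on u (b \<circ> g) T)(t := ?s t)" for g
      using insert.hyps by (auto simp: override_on_def fun_eq_iff)
    show ?thesis
      unfolding override_on_insert' insert.IH upd ..
  qed
  also have "\<dots> = (\<Sum>g\<in>T \<rightarrow>\<^sub>E I. \<Sum>i\<in>I. ?F (insert t T) (g(t := i)))"
  proof -
    have "(\<Prod>j\<in>insert t T. a j ((g(t := i)) j)) = a t i * (\<Prod>j\<in>T. a j (g j))" for g i
      using insert.hyps by (auto intro!: prod.cong)
    then show ?thesis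
      by (simp add: slot sum_distrib_left mult.assoc mult.left_commute)
  qed
  also have "\<dots> = (\<Sum>(i, g)\<in>I \<times> (T \<rightarrow>\<^sub>E I). ?F (insert t T) (g(t := i)))"
    by (subst sum.swap) (simp add: sum.cartesian_product)
  also have "\<dots> = (\<Sum>g\<in>insert t T \<rightarrow>\<^sub>E I. ?F (insert t T) g)"
    unfolding PiE_insert_eq using insert.hyps
    by (subst sum.reindex[OF inj_combinator]) (simp_all add: case_prod_unfold)
  finally show ?case .
qed

lemma multilinear_basis_expansion:
  fixes f :: "('d::finite \<Rightarrow> real ^ 'n) \<Rightarrow> real"
  assumes "multilinear f"
  shows "f w = (\<Sum>\<iota>\<in>UNIV. (\<Prod>j\<in>UNIV. w j $ \<iota> j) * f (\<lambda>j. axis (\<iota> j) 1))"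
proof -
  have "(\<Sum>i\<in>UNIV. x $ i *\<^sub>R axis i 1) = x" for x :: "real ^ 'n"
    using basis_expansion[of x] by (simp only: scalar_mult_eq_scaleR)
  then have "f w = f (override_on w (\<lambda>j. \<Sum>i\<in>UNIV. w j $ i *\<^sub>R axis i 1) UNIV)"
    by (simp only: override_on_def UNIV_I if_True)
  also have "\<dots> = (\<Sum>\<iota>\<in>UNIV. (\<Prod>j\<in>UNIV. w j $ \<iota> j) * f (\<lambda>j. axis (\<iota> j) 1))"
    by (subst multilinear_sum_expansion[OF assms]) (simp_all add: override_on_def o_def)
  finally show ?thesis .
qed

lemma alternating_transpose:
  fixes f :: "('d \<Rightarrow> 'v::real_vector) \<Rightarrow> real"
  assumes "multilinear f" "alternating f" "a \<noteq> b"
  shows "f (v \<circ> Transposition.transpose a b) = - f v"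
proof -
  define g where "g x y = f (v(a := x, b := y))" for x y
  have "linear (\<lambda>x. g x y)" for y
    using assms(1,3) by (simp add: g_def multilinear_def fun_upd_twist[of a b])
  then have add1: "g (x + x') y = g x y + g x' y" for x x' y
    using linear_add by blast
  have "linear (\<lambda>y. g x y)" for x
    using assms(1) by (simp add: g_def multilinear_def)
  then have add2: "g x (y + y') = g x y + g x y'" for x y y'
    using linear_add by blast
  have "g (v a + v b) (v a + v b) = g (v a) (v a) + g (v a) (v b) + g (v b) (v a) + g (v b) (v b)"
    by (simp add: add1 add2)
  moreover have "g x x = 0" for x
    unfolding g_def using assms(3) by (intro alternatingD[OF assms(2), of a b]) auto
  ultimately have "g (v b) (v a) = - g (v a) (v b)"
    by simp
  moreover have "v \<circ> Transposition.transpose a b = v(a := v b, b := v a)"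
    using assms(3) by (auto simp: Transposition.transpose_def)
  ultimately show ?thesis
    by (simp add: g_def)
qed

lemma alternating_permute:
  fixes f :: "('d::finite \<Rightarrow> 'v::real_vector) \<Rightarrow> real"
  assumes "multilinear f" "alternating f" "p permutes UNIV"
  shows "f (v \<circ> p) = sign p * f v"
  using assms(3) finite_class.finite_UNIV
proof (induction p arbitrary: v rule: permutes_induct)
  case id
  then show ?case by simp
next
  case (swap a b p)
  then have "permutation p"
    by (meson finite_class.finite_UNIV permutation_permutes)
  have "f (v \<circ> (Transposition.transpose a b \<circ> p)) = sign p * f (v \<circ> Transposition.transpose a b)"
    unfolding o_assoc by (rule swap.IH)
  also have "\<dots> = sign (Transposition.transpose a b \<circ> p) * f v"
    using \<open>permutation p\<close> \<open>a \<noteq> b\<close>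
    by (simp add: alternating_transpose[OF assms(1,2)] sign_compose permutation_swap_id sign_swap_id)
  finally show ?case .
qed

lemma sum_inj_comp_permutes:
  assumes p: "p permutes (UNIV :: 'd set)"
  shows "(\<Sum>\<iota>\<in>{\<iota> :: 'd \<Rightarrow> 'n. inj \<iota>}. h (\<iota> \<circ> p)) = (\<Sum>\<iota>\<in>{\<iota>. inj \<iota>}. h \<iota>)"
proof (rule sum.reindex_bij_betw)
  show "bij_betw (\<lambda>\<iota>. \<iota> \<circ> p) {\<iota>. inj \<iota>} {\<iota>. inj \<iota>}"
  proof (rule bij_betw_byWitness[where f'="\<lambda>\<iota>. \<iota> \<circ> inv p"])
    show "\<forall>\<iota>\<in>{\<iota>. inj \<iota>}. \<iota> \<circ> p \<circ> inv p = \<iota>" "\<forall>\<iota>\<in>{\<iota>. inj \<iota>}. \<iota> \<circ> inv p \<circ> p = \<iota>"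
      using permutes_inverses[OF p] by (auto simp: o_def)
    show "(\<lambda>\<iota>. \<iota> \<circ> p) ` {\<iota>. inj \<iota>} \<subseteq> {\<iota>. inj \<iota>}" "(\<lambda>\<iota>. \<iota> \<circ> inv p) ` {\<iota>. inj \<iota>} \<subseteq> {\<iota>. inj \<iota>}"
      using permutes_inj[OF p] permutes_inj[OF permutes_inv[OF p]] by (auto intro: inj_compose)
  qed
qed

lemma alternating_expansion_inj:
  fixes f :: "('d::finite \<Rightarrow> real ^ 'n) \<Rightarrow> real"
  assumes "multilinear f" "alternating f"
  shows "f w = (\<Sum>\<iota>\<in>{\<iota>. inj \<iota>}. (\<Prod>j\<in>UNIV. w j $ \<iota> j) * f (\<lambda>j. axis (\<iota> j) 1))"
proof -
  have "f w = (\<Sum>\<iota>\<in>UNIV. (\<Prod>j\<in>UNIV. w j $ \<iota> j) * f (\<lambda>j. axis (\<iota> j) 1))"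
    by (rule multilinear_basis_expansion[OF assms(1)])
  also have "\<dots> = (\<Sum>\<iota>\<in>{\<iota>. inj \<iota>}. (\<Prod>j\<in>UNIV. w j $ \<iota> j) * f (\<lambda>j. axis (\<iota> j) 1))"
    by (rule sum.mono_neutral_right) (auto simp: inj_def intro: alternatingD[OF assms(2)])
  finally show ?thesis .
qed

text \<open>Every \<open>d\<close>-element set of indices is the image of \<open>d!\<close> injections \<open>\<iota>\<close>, whence the factor
  \<open>1 / d!\<close>; summing over injections avoids having to order the index type \<open>'n\<close>.\<close>

lemma alternating_eq_sum_minors:
  fixes f :: "('d::finite \<Rightarrow> real ^ 'n) \<Rightarrow> real"
  assumes f: "multilinear f" "alternating f"
  shows "f w = (1 / fact CARD('d)) *
    (\<Sum>\<iota>\<in>{\<iota>. inj \<iota>}. f (\<lambda>j. axis (\<iota> j) 1) * det (\<chi> k j. w j $ \<iota> k))"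
proof -
  define c where "c \<iota> = f (\<lambda>j. axis (\<iota> j) 1)" for \<iota> :: "'d \<Rightarrow> 'n"
  define P where "P \<iota> = (\<Prod>j\<in>UNIV. w j $ \<iota> j)" for \<iota> :: "'d \<Rightarrow> 'n"
  let ?Inj = "{\<iota> :: 'd \<Rightarrow> 'n. inj \<iota>}"
  let ?Perm = "{p. p permutes (UNIV :: 'd set)}"
  have permuted: "(\<Sum>\<iota>\<in>?Inj. sign p * c \<iota> * (\<Prod>k\<in>UNIV. w (p k) $ \<iota> k)) = f w"
    if p: "p permutes UNIV" for p
  proof -
    have "(\<Sum>\<iota>\<in>?Inj. sign p * c \<iota> * (\<Prod>k\<in>UNIV. w (p k) $ \<iota> k)) =
        (\<Sum>\<iota>\<in>?Inj. sign p * c (\<iota> \<circ> p) * (\<Prod>k\<in>UNIV. w (p k) $ \<iota> (p k)))"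
      using sum_inj_comp_permutes[OF p, of "\<lambda>\<iota>. sign p * c \<iota> * (\<Prod>k\<in>UNIV. w (p k) $ \<iota> k)"]
      by simp
    also have "\<dots> = (\<Sum>\<iota>\<in>?Inj. P \<iota> * c \<iota>)"
    proof (rule sum.cong[OF refl])
      fix \<iota> :: "'d \<Rightarrow> 'n"
      have "c (\<iota> \<circ> p) = sign p * c \<iota>"
        using alternating_permute[OF f p, of "\<lambda>j. axis (\<iota> j) 1"] by (simp add: c_def o_def)
      moreover have "(\<Prod>k\<in>UNIV. w (p k) $ \<iota> (p k)) = P \<iota>"
        unfolding P_def using prod.permute[OF p, of "\<lambda>j. w j $ \<iota> j"] by (simp add: o_def)
      ultimately show "sign p * c (\<iota> \<circ> p) * (\<Prod>k\<in>UNIV. w (p k) $ \<iota> (p k)) = P \<iota> * c \<iota>"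
        by (simp flip: of_int_mult add: sign_idempotent)
    qed
    also have "\<dots> = f w"
      unfolding P_def c_def by (rule alternating_expansion_inj[OF f, symmetric])
    finally show ?thesis .
  qed
  have "(\<Sum>\<iota>\<in>?Inj. c \<iota> * det (\<chi> k j. w j $ \<iota> k)) =
      (\<Sum>\<iota>\<in>?Inj. \<Sum>p\<in>?Perm. sign p * c \<iota> * (\<Prod>k\<in>UNIV. w (p k) $ \<iota> k))"
    unfolding det_def by (simp add: sum_distrib_left algebra_simps)
  also have "\<dots> = (\<Sum>p\<in>?Perm. f w)"
    by (subst sum.swap) (simp add: permuted)
  also have "\<dots> = fact CARD('d) * f w"
    by (simp add: card_permutations[of UNIV "CARD('d)"])
  finally show ?thesis
    by (simp add: c_def)
qed

lemma linear_det_row: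
  fixes A :: "real ^ 'n ^ 'n"
  shows "linear (\<lambda>r. det (\<chi> j. if j = i then r else A $ j))"
proof (rule linearI)
  show "det (\<chi> j. if j = i then r + r' else A $ j) =
      det (\<chi> j. if j = i then r else A $ j) + det (\<chi> j. if j = i then r' else A $ j)" for r r'
    by (rule det_row_add)
  show "det (\<chi> j. if j = i then c *\<^sub>R r else A $ j) = c *\<^sub>R det (\<chi> j. if j = i then r else A $ j)"
    for c r
    using det_row_mul[of i c "\<lambda>_. r" "\<lambda>j. A $ j"] by (simp only: scalar_mult_eq_scaleR real_scaleR_def)
qed

definition coordinate_form :: "('d \<Rightarrow> 'n) \<Rightarrow> ('d::finite \<Rightarrow> real ^ 'n) \<Rightarrow> real" where
  "coordinate_form \<iota> v = det (\<chi> k j. v j $ \<iota> k)"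

lemma multilinear_coordinate_form:
  fixes \<iota> :: "'d::finite \<Rightarrow> 'n::finite"
  shows "multilinear (coordinate_form \<iota>)"
  unfolding multilinear_def
proof (intro allI)
  fix v :: "'d \<Rightarrow> real ^ 'n" and i :: 'd
  let ?restrict = "\<lambda>u :: real ^ 'n. \<chi> k. u $ \<iota> k :: real ^ 'd"
  have "(\<chi> k j. (v(i := u)) j $ \<iota> k) =
      transpose (\<chi> j. if j = i then ?restrict u else (\<chi> j k. v j $ \<iota> k) $ j)" for u
    by (auto simp: transpose_def vec_eq_iff)
  then have "coordinate_form \<iota> (v(i := u)) =
      det (\<chi> j. if j = i then ?restrict u else (\<chi> j k. v j $ \<iota> k) $ j)" for u
    by (simp add: coordinate_form_def)
  moreover have "linear ?restrict"
    by (auto intro!: linearI simp: vec_eq_iff)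
  ultimately show "linear (\<lambda>u. coordinate_form \<iota> (v(i := u)))"
    using linear_compose[OF _ linear_det_row] by (simp add: o_def)
qed

lemma alternating_coordinate_form: "alternating (coordinate_form \<iota>)"
  unfolding alternating_def coordinate_form_def
  by (auto intro: det_identical_columns simp: column_def vec_eq_iff)

lemma continuous_dform_coordinate_form: "continuous_dform K (\<lambda>_. coordinate_form \<iota>)"
  by (simp add: continuous_dform_iff multilinear_coordinate_form alternating_coordinate_form)

lemma pullback_coeff_coordinate_form:
  "pullback_coeff (\<lambda>_. coordinate_form \<iota>) \<sigma> = pullback_coord_coeff \<iota> \<sigma>"
  by (simp add: fun_eq_iff pullback_coeff_def pullback_coord_coeff_def coordinate_form_def)

lemma pullback_coeff_eq_sum_coord_coeff:
  assumes "multilinear (\<omega> (\<sigma> a))" "alternating (\<omega> (\<sigma> a))"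
  shows "pullback_coeff \<omega> \<sigma> a = (1 / fact CARD('d)) *
    (\<Sum>\<iota>\<in>{\<iota> :: 'd::finite \<Rightarrow> 'n::finite. inj \<iota>}. \<omega> (\<sigma> a) (\<lambda>j. axis (\<iota> j) 1) * pullback_coord_coeff \<iota> \<sigma> a)"
  unfolding pullback_coeff_def pullback_coord_coeff_def
  by (rule alternating_eq_sum_minors[OF assms])

lemma absolutely_integrable_continuous_mult:
  fixes f g :: "'a::euclidean_space \<Rightarrow> real"
  assumes "continuous_on K g" "compact K" "S \<subseteq> K" "S \<in> sets lebesgue"
    and "f absolutely_integrable_on S"
  shows "(\<lambda>x. g x * f x) absolutely_integrable_on S"
proof (rule absolutely_integrable_bounded_measurable_product[OF bilinear_times])
  show "g \<in> borel_measurable (lebesgue_on S)"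
    using assms(1,3,4) by (blast intro: continuous_imp_measurable_on_sets_lebesgue continuous_on_subset)
  show "bounded (g ` S)"
    using assms(1-3) by (meson bounded_subset compact_continuous_image compact_imp_bounded image_mono)
qed (use assms in auto)

lemma absolutely_integrable_pullback_coeff:
  fixes \<sigma> :: "real ^ 'd \<Rightarrow> real ^ 'n"
  assumes \<sigma>: "continuous_on K \<sigma>" and "compact K" "S \<subseteq> K" "S \<in> sets lebesgue"
    and \<omega>: "continuous_dform (\<sigma> ` K) \<omega>"
    and coord: "\<And>\<iota> :: 'd \<Rightarrow> 'n. inj \<iota> \<Longrightarrow> pullback_coord_coeff \<iota> \<sigma> absolutely_integrable_on S"
  shows "pullback_coeff \<omega> \<sigma> absolutely_integrable_on S"
proof -
  let ?c = "\<lambda>\<iota> a. \<omega> (\<sigma> a) (\<lambda>j. axis (\<iota> j) 1)"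
  have "continuous_on K (?c \<iota>)" for \<iota> :: "'d \<Rightarrow> 'n"
    using \<omega> \<sigma> by (auto simp: continuous_dform_iff intro: continuous_on_compose2)
  then have "(\<lambda>a. (1 / fact CARD('d)) *\<^sub>R (\<Sum>\<iota>\<in>{\<iota>. inj \<iota>}. ?c \<iota> a * pullback_coord_coeff \<iota> \<sigma> a))
      absolutely_integrable_on S"
    using assms(2-4) coord
    by (intro absolutely_integrable_scaleR_left absolutely_integrable_sum
        absolutely_integrable_continuous_mult) auto
  moreover have "pullback_coeff \<omega> \<sigma> a =
      (1 / fact CARD('d)) *\<^sub>R (\<Sum>\<iota>\<in>{\<iota>. inj \<iota>}. ?c \<iota> a * pullback_coord_coeff \<iota> \<sigma> a)"
    if "a \<in> S" for a
  proof -
    have "\<sigma> a \<in> \<sigma> ` K"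
      using \<open>S \<subseteq> K\<close> that by blast
    then have "multilinear (\<omega> (\<sigma> a))" "alternating (\<omega> (\<sigma> a))"
      using \<omega> unfolding continuous_dform_iff by blast+
    then show ?thesis
      by (simp only: pullback_coeff_eq_sum_coord_coeff real_scaleR_def)
  qed
  ultimately show ?thesis
    by (rule absolutely_integrable_spike[OF _ negligible_empty]) simp_all
qed

lemma compact_std_simplex: "compact std_simplex"
proof (rule compact_eq_bounded_closed[THEN iffD2, OF conjI])
  have "norm x \<le> 1" if "x \<in> std_simplex" for x :: "real ^ 'd"
  proof -
    have "norm x \<le> (\<Sum>i\<in>UNIV. \<bar>x $ i\<bar>)"
      by (rule norm_le_l1_cart)
    also have "\<dots> \<le> 1"
      using that by (simp add: std_simplex_def)
    finally show ?thesis .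
  qed
  then show "bounded (std_simplex :: (real ^ 'd) set)"
    by (rule boundedI)
  show "closed (std_simplex :: (real ^ 'd) set)"
    unfolding std_simplex_def
    by (intro closed_Collect_conj closed_Collect_all closed_Collect_le continuous_intros)
qed

theorem lemma2p3:
  fixes \<sigma> :: "real ^ 'd \<Rightarrow> real ^ 'n"
  assumes "continuous_on std_simplex \<sigma>"
    and "\<And>F. F face_of std_simplex \<Longrightarrow> C1_on \<sigma> (rel_interior F)"
  shows "finite_volume \<sigma> \<longleftrightarrow>
         (\<forall>\<iota> :: 'd \<Rightarrow> 'n. inj \<iota> \<longrightarrow>
            pullback_coord_coeff \<iota> \<sigma> absolutely_integrable_on interior std_simplex)"
proof
  assume "finite_volume \<sigma>"
  then show "\<forall>\<iota> :: 'd \<Rightarrow> 'n. inj \<iota> \<longrightarrow>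
      pullback_coord_coeff \<iota> \<sigma> absolutely_integrable_on interior std_simplex"
    unfolding finite_volume_def
    by (metis continuous_dform_coordinate_form pullback_coeff_coordinate_form)
next
  assume "\<forall>\<iota> :: 'd \<Rightarrow> 'n. inj \<iota> \<longrightarrow>
      pullback_coord_coeff \<iota> \<sigma> absolutely_integrable_on interior std_simplex"
  moreover have "interior std_simplex \<in> sets lebesgue"
    by (simp add: borel_open sets_completionI_sets)
  ultimately show "finite_volume \<sigma>"
    unfolding finite_volume_def
    using absolutely_integrable_pullback_coeff[OF assms(1) compact_std_simplex interior_subset]
    by blast
qed

end
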